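(* Fix a constant $c \in (0,1)$. For $\eta \in (0,1]$, $\omega \in [-c,c]$ and $\epsilon \in (0,1)$, let $f:[-1,1]\to\mathbb{C}$ be the $\eta$-scaled retarded Green's function $$f(x) = \frac{\eta}{(\omega + i\eta) - x}.$$ Then there is a polynomial $p_d$ (with complex coefficients) of degree $d = O\!\left(\frac{1}{\eta}\log\frac{1}{\epsilon}\right)$, where the implied constant depends only on $c$, such that $\|f - p_d\|_{[-1,1]} \le \epsilon$ and $\|p_d\|_{[-1,1]} \le 1+\epsilon$.
   Context: For a function $g$ on $[-1,1]$, $\|g\|_{[-1,1]} = \sup_{x\in[-1,1]} |g(x)|$ denotes the uniform norm; $i$ is the imaginary unit. *)

theory Defs
  imports "HOL-Analysis.Analysis" "HOL-Computational_Algebra.Polynomial"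
begin

definition green :: "real \<Rightarrow> real \<Rightarrow> real \<Rightarrow> complex" where
  "green \<eta> \<omega> x = complex_of_real \<eta> / ((complex_of_real \<omega> + \<i> * complex_of_real \<eta>) - complex_of_real x)"

end

theory Submission
  imports Defs
begin

text \<open>For \<open>z\<close> off \<open>[-1, 1]\<close> let \<open>r\<close> be the root of \<open>r\<^sup>2 - 2 z r + 1 = 0\<close> in the closed unit
  disc. The Chebyshev generating function expands \<open>1 / (z - x)\<close> in powers \<open>r\<^sup>k T\<^sub>k(x)\<close>, and
  since \<open>|T\<^sub>k| \<le> 1\<close> on \<open>[-1, 1]\<close> the tail after degree \<open>n\<close> is at most
  \<open>4 |r|\<^sup>n\<^sup>+\<^sup>1 / (|1 - r\<^sup>2| |z - x|)\<close>. For \<open>z = \<omega> + i \<eta>\<close> the imaginary part of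
  \<open>r + 1/r = 2 z\<close> forces \<open>|r| \<le> 1 / (1 + \<eta>)\<close>, and \<open>(1 - r\<^sup>2)\<^sup>2 = 4 r\<^sup>2 (z - 1) (z + 1)\<close> gives
  \<open>|1 - r\<^sup>2| \<ge> 2 |r| (1 - |\<omega>|)\<close>; hence \<eta> times the truncation approximates the Green's function
  to within \<open>2 / ((1 - |\<omega>|) (1 + \<eta>)\<^sup>n)\<close>, which is below \<open>\<epsilon>\<close> once \<open>n \<approx> 2 ln(2 / ((1 - c) \<epsilon>)) / \<eta>\<close>.
  When \<open>\<epsilon> \<ge> 1/2\<close> the admissible degree may be \<open>0\<close>; then the constant \<open>-i/2\<close> works,
  because the Green's function takes values on the circle \<open>|w + i/2| = 1/2\<close>.
  The bound \<open>|p| \<le> 1 + \<epsilon>\<close> follows from \<open>|f| \<le> 1\<close>.\<close>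

fun cheb :: "nat \<Rightarrow> 'a::comm_ring_1 poly" where
  "cheb 0 = 1"
| "cheb (Suc 0) = [:0, 1:]"
| "cheb (Suc (Suc n)) = [:0, 2:] * cheb (Suc n) - cheb n"

lemma poly_cheb_Suc_Suc:
  "poly (cheb (Suc (Suc n))) x = 2 * x * poly (cheb (Suc n)) x - poly (cheb n) x"
  by (simp add: algebra_simps)

lemma degree_cheb_le: "degree (cheb n :: 'a::comm_ring_1 poly) \<le> n"
proof (induction n rule: cheb.induct)
  case (3 n)
  have "degree ([:0, 2:] * cheb (Suc n) :: 'a poly) \<le> degree [:0, 2::'a:] + degree (cheb (Suc n) :: 'a poly)"
    by (rule degree_mult_le)
  also have "\<dots> \<le> Suc (Suc n)"
    using 3(1) degree_pCons_le[of 0 "[:2::'a:]"] by simp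
  finally show ?case
    using 3(2) by (simp only: cheb.simps) (rule degree_diff_le, simp_all)
qed auto

lemma poly_cheb_cos:
  "poly (cheb n) (of_real (cos t) :: 'a::{real_algebra_1,comm_ring_1}) = of_real (cos (real n * t))"
proof (induction n rule: cheb.induct)
  case (3 n)
  have "cos (real (Suc (Suc n)) * t) = 2 * cos t * cos (real (Suc n) * t) - cos (real n * t)"
    using cos_add[of "real (Suc n) * t" t] cos_diff[of "real (Suc n) * t" t]
    by (simp add: algebra_simps)
  then show ?case
    by (simp only: poly_cheb_Suc_Suc 3) simp
qed auto

lemma norm_poly_cheb_le_1:
  assumes "\<bar>x\<bar> \<le> 1"
  shows "norm (poly (cheb n) (of_real x :: 'a::{real_normed_algebra_1,comm_ring_1})) \<le> 1"
  using poly_cheb_cos[of n "arccos x", where 'a='a] assms by simp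

lemma cheb_partial_sum:
  "(1 - 2 * r * x + r^2) * (\<Sum>k\<le>n. r^k * poly (cheb k) x) =
     1 - r * x - r^(n+1) * poly (cheb (n+1)) x + r^(n+2) * poly (cheb n) x"
proof (induction n)
  case (Suc n)
  then show ?case
    by (simp add: poly_cheb_Suc_Suc algebra_simps power2_eq_square)
qed (simp add: algebra_simps power2_eq_square)

lemma joukowski_root_in_unit_disc:
  fixes z :: complex
  obtains r where "r^2 - 2 * z * r + 1 = 0" "norm r \<le> 1"
proof -
  define q where "q = csqrt (z^2 - 1)"
  have q: "q^2 = z^2 - 1"
    unfolding q_def by simp
  have roots: "(z - q)^2 - 2 * z * (z - q) + 1 = 0" "(z + q)^2 - 2 * z * (z + q) + 1 = 0"
    using q by (simp_all add: algebra_simps power2_eq_square)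
  have "(z - q) * (z + q) = 1"
    using q by (simp add: algebra_simps power2_eq_square)
  then have "norm (z - q) * norm (z + q) = 1"
    by (metis norm_mult norm_one)
  then have "norm (z - q) \<le> 1 \<or> norm (z + q) \<le> 1"
    using less_1_mult[of "norm (z - q)" "norm (z + q)"] by linarith
  then show thesis
    using that roots by blast
qed

lemma norm_joukowski_root_le:
  fixes z r :: complex
  assumes root: "r^2 - 2 * z * r + 1 = 0" and "norm r \<le> 1"
  shows "norm r \<le> 1 / (1 + \<bar>Im z\<bar>)"
proof -
  define s where "s = norm r"
  have s: "0 < s" "s \<le> 1"
    using root assms(2) by (auto simp: s_def)
  have "2 * z * of_real (s^2) = r * of_real (s^2) + cnj r"
  proof -
    have "2 * z * r * cnj r = (r^2 + 1) * cnj r"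
      using root by (simp add: algebra_simps)
    moreover have "of_real (s^2) = r * cnj r"
      unfolding s_def by (rule complex_norm_square)
    ultimately show ?thesis
      by (simp add: algebra_simps power2_eq_square)
  qed
  then have "Im (2 * z * of_real (s^2)) = Im (r * of_real (s^2) + cnj r)"
    by (rule arg_cong)
  then have "2 * Im z * s^2 = Im r * (s^2 - 1)"
    by (simp add: algebra_simps)
  then have "2 * \<bar>Im z\<bar> * s^2 = \<bar>Im r\<bar> * \<bar>s^2 - 1\<bar>"
    by (metis abs_mult abs_numeral abs_power2)
  also have "\<dots> = \<bar>Im r\<bar> * (1 - s^2)"
    using s power_le_one[of s 2] by simp
  also have "\<dots> \<le> s * ((1 - s) * (1 + s))"
    using s abs_Im_le_cmod[of r] mult_le_one[of s s]
    by (intro mult_mono) (simp_all add: s_def power2_eq_square algebra_simps)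
  also have "\<dots> \<le> s * ((1 - s) * 2)"
    using s by (intro mult_left_mono) simp_all
  finally have "\<bar>Im z\<bar> * s \<le> 1 - s"
    using s by (simp add: power2_eq_square)
  then show ?thesis
    using s by (simp add: s_def field_simps)
qed

lemma norm_one_minus_joukowski_root_sq_ge:
  fixes z r :: complex
  assumes root: "r^2 - 2 * z * r + 1 = 0" and "\<bar>Re z\<bar> \<le> 1"
  shows "2 * norm r * (1 - \<bar>Re z\<bar>) \<le> norm (1 - r^2)"
proof -
  have "(1 - r^2)^2 - 4 * r^2 * ((z - 1) * (z + 1)) = (r^2 - 2 * z * r + 1) * (r^2 + 2 * z * r + 1)"
    by algebra
  then have "(1 - r^2)^2 = 4 * r^2 * ((z - 1) * (z + 1))"
    using root by simp
  then have "norm (1 - r^2)^2 = 4 * norm r^2 * (norm (z - 1) * norm (z + 1))"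
    by (metis norm_mult norm_power norm_numeral)
  moreover have "(1 - \<bar>Re z\<bar>) * (1 - \<bar>Re z\<bar>) \<le> norm (z - 1) * norm (z + 1)"
    using abs_Re_le_cmod[of "z - 1"] abs_Re_le_cmod[of "z + 1"] assms(2) by (intro mult_mono) auto
  ultimately have "(2 * norm r * (1 - \<bar>Re z\<bar>))^2 \<le> norm (1 - r^2)^2"
    by (simp add: power_mult_distrib mult_left_mono flip: power2_eq_square)
  then show ?thesis
    by (rule power2_le_imp_le) simp
qed

text \<open>If \<open>r\<^sup>2 - 2 z r + 1 = 0\<close>, the Chebyshev generating function gives
  \<open>1 / (z - x) = 2 r / (1 - r\<^sup>2) * (1 + 2 \<Sum>\<^sub>k\<^sub>\<ge>\<^sub>1 r\<^sup>k T\<^sub>k(x))\<close>;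
  this is its truncation after the term of degree \<open>n\<close>.\<close>
definition cheb_resolvent_approx :: "'a::field \<Rightarrow> nat \<Rightarrow> 'a poly" where
  "cheb_resolvent_approx r n =
     smult (2 * r / (1 - r^2)) (smult 2 (\<Sum>k\<le>n. smult (r^k) (cheb k)) - 1)"

lemma degree_cheb_resolvent_approx_le: "degree (cheb_resolvent_approx r n) \<le> n"
proof -
  have "degree (\<Sum>k\<le>n. smult (r^k) (cheb k)) \<le> n"
    by (intro degree_sum_le) (auto intro: order.trans[OF degree_smult_le] order.trans[OF degree_cheb_le])
  then show ?thesis
    unfolding cheb_resolvent_approx_def
    by (intro order.trans[OF degree_smult_le] degree_diff_le) (auto intro: order.trans[OF degree_smult_le])
qed

lemma cheb_resolvent_approx_remainder:
  fixes r z x :: "'a::field"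
  assumes root: "r^2 - 2 * z * r + 1 = 0" and "1 - r^2 \<noteq> 0"
  shows "(1 - r^2) * (1 - (z - x) * poly (cheb_resolvent_approx r n) x) =
           2 * r^(n+1) * (poly (cheb (n+1)) x - r * poly (cheb n) x)"
proof -
  define S where "S = (\<Sum>k\<le>n. r^k * poly (cheb k) x)"
  have "(1 - r^2) * (1 - (z - x) * poly (cheb_resolvent_approx r n) x)
      = (1 - r^2) - (z - x) * ((1 - r^2) * poly (cheb_resolvent_approx r n) x)"
    by (simp add: algebra_simps)
  also have "(1 - r^2) * poly (cheb_resolvent_approx r n) x = 2 * r * (2 * S - 1)"
    using assms(2) by (simp add: cheb_resolvent_approx_def S_def poly_sum)
  also have "(1 - r^2) - (z - x) * (2 * r * (2 * S - 1)) = (1 - r^2) - 2 * r * (z - x) * (2 * S - 1)"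
    by (simp add: algebra_simps)
  also have "2 * r * (z - x) = 1 - 2 * r * x + r^2"
    using root by (simp add: algebra_simps power2_eq_square)
  also have "(1 - r^2) - (1 - 2 * r * x + r^2) * (2 * S - 1)
      = (1 - r^2) - 2 * ((1 - 2 * r * x + r^2) * S) + (1 - 2 * r * x + r^2)"
    by (simp add: algebra_simps)
  also have "\<dots> = 2 * r^(n+1) * (poly (cheb (n+1)) x - r * poly (cheb n) x)"
    unfolding S_def cheb_partial_sum by (simp add: algebra_simps power2_eq_square)
  finally show ?thesis .
qed

lemma norm_inverse_minus_cheb_resolvent_approx_le:
  fixes z r :: "'a::real_normed_field"
  assumes root: "r^2 - 2 * z * r + 1 = 0" and "norm r \<le> 1" "1 - r^2 \<noteq> 0"
    and "\<bar>x\<bar> \<le> 1" "z \<noteq> of_real x"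
  shows "norm (inverse (z - of_real x) - poly (cheb_resolvent_approx r n) (of_real x))
           \<le> 4 * norm r^(n+1) / (norm (1 - r^2) * norm (z - of_real x))"
proof -
  define E where "E = poly (cheb (n+1)) (of_real x) - r * poly (cheb n) (of_real x)"
  have "norm E \<le> norm (poly (cheb (n+1)) (of_real x :: 'a)) + norm r * norm (poly (cheb n) (of_real x :: 'a))"
    unfolding E_def by (rule order.trans[OF norm_triangle_ineq4]) (simp add: norm_mult)
  also have "\<dots> \<le> 1 + 1 * 1"
    using assms(2) norm_poly_cheb_le_1[OF assms(4)] by (intro add_mono mult_mono) simp_all
  finally have E: "norm E \<le> 2"
    by simp
  define Y where "Y = z - of_real x"
  define p where "p = poly (cheb_resolvent_approx r n) (of_real x)"
  have "inverse Y - p = (1 - Y * p) / Y"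
    using assms(5) by (simp add: Y_def field_simps)
  also have "1 - Y * p = 2 * r^(n+1) * E / (1 - r^2)"
    using cheb_resolvent_approx_remainder[OF root assms(3), of "of_real x" n] assms(3)
    by (simp add: E_def Y_def p_def eq_divide_eq mult.commute)
  finally have "inverse (z - of_real x) - poly (cheb_resolvent_approx r n) (of_real x)
      = 2 * r^(n+1) * E / ((1 - r^2) * (z - of_real x))"
    by (simp add: Y_def p_def)
  also have "norm \<dots> \<le> 4 * norm r^(n+1) / (norm (1 - r^2) * norm (z - of_real x))"
    unfolding norm_divide norm_mult norm_power
    using E by (intro divide_right_mono) (simp_all add: mult_right_mono)
  finally show ?thesis .
qed

lemma green_eq_inverse:
  "green \<eta> \<omega> x = of_real \<eta> * inverse (Complex \<omega> \<eta> - of_real x)"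
  by (simp add: green_def Complex_eq divide_inverse)

lemma norm_green_le_1:
  assumes "0 < \<eta>"
  shows "cmod (green \<eta> \<omega> x) \<le> 1"
proof -
  have "\<eta> \<le> cmod (Complex \<omega> \<eta> - of_real x)"
    using abs_Im_le_cmod[of "Complex \<omega> \<eta> - of_real x"] by simp
  moreover have "cmod (green \<eta> \<omega> x) = \<eta> / cmod (Complex \<omega> \<eta> - of_real x)"
    using assms by (simp add: green_eq_inverse norm_mult norm_inverse divide_inverse)
  ultimately show ?thesis
    using assms by (simp add: divide_le_eq_1)
qed

lemma norm_green_plus_half_i:
  assumes "0 < \<eta>"
  shows "cmod (green \<eta> \<omega> x + \<i> / 2) = 1 / 2"
proof -
  define Y where "Y = Complex \<omega> \<eta> - of_real x"
  have "Y \<noteq> 0"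
    using assms by (simp add: Y_def complex_eq_iff)
  moreover have "2 * of_real \<eta> + \<i> * Y = \<i> * cnj Y"
    by (simp add: Y_def complex_eq_iff)
  ultimately have "green \<eta> \<omega> x + \<i> / 2 = \<i> * cnj Y / (2 * Y)"
    by (simp add: green_eq_inverse Y_def[symmetric] field_simps)
  then show ?thesis
    using \<open>Y \<noteq> 0\<close> by (simp add: norm_mult norm_divide)
qed

lemma norm_green_minus_cheb_resolvent_approx_le:
  assumes root: "r^2 - 2 * Complex \<omega> \<eta> * r + 1 = 0" and "norm r \<le> 1"
    and "0 < \<eta>" "\<bar>\<omega>\<bar> < 1" "\<bar>x\<bar> \<le> 1"
  shows "cmod (green \<eta> \<omega> x - of_real \<eta> * poly (cheb_resolvent_approx r n) (of_real x))
           \<le> 2 * norm r^n / (1 - \<bar>\<omega>\<bar>)"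
proof -
  define s where "s = norm r"
  define Y where "Y = Complex \<omega> \<eta> - of_real x"
  have s: "0 < s"
    using root by (auto simp: s_def)
  have D: "2 * s * (1 - \<bar>\<omega>\<bar>) \<le> norm (1 - r^2)"
    using norm_one_minus_joukowski_root_sq_ge[OF root] assms(4) by (simp add: s_def)
  moreover have "0 < 2 * s * (1 - \<bar>\<omega>\<bar>)"
    using s assms(4) by simp
  ultimately have "1 - r^2 \<noteq> 0"
    by auto
  have Y: "\<eta> \<le> norm Y"
    using abs_Im_le_cmod[of Y] assms(3) by (simp add: Y_def)
  then have "Y \<noteq> 0"
    using assms(3) by auto
  have "cmod (green \<eta> \<omega> x - of_real \<eta> * poly (cheb_resolvent_approx r n) (of_real x))
      = \<eta> * norm (inverse Y - poly (cheb_resolvent_approx r n) (of_real x))"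
    using assms(3) by (simp add: green_eq_inverse Y_def norm_mult flip: right_diff_distrib)
  also have "\<dots> \<le> \<eta> * (4 * s^(n+1) / (norm (1 - r^2) * norm Y))"
    using norm_inverse_minus_cheb_resolvent_approx_le[OF root assms(2) \<open>1 - r^2 \<noteq> 0\<close> assms(5)]
      \<open>Y \<noteq> 0\<close> assms(3)
    by (intro mult_left_mono) (simp_all add: Y_def s_def)
  also have "\<dots> \<le> \<eta> * (4 * s^(n+1) / ((2 * s * (1 - \<bar>\<omega>\<bar>)) * \<eta>))"
    using D Y s assms \<open>1 - r^2 \<noteq> 0\<close> \<open>Y \<noteq> 0\<close>
    by (intro mult_left_mono divide_left_mono mult_mono) simp_all
  also have "\<dots> = 2 * s^n / (1 - \<bar>\<omega>\<bar>)"
    using s assms by (simp add: field_simps)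
  finally show ?thesis
    by (simp add: s_def)
qed

lemma green_cheb_approx:
  assumes "0 < \<eta>" "\<bar>\<omega>\<bar> < 1"
  shows "\<exists>p. degree p \<le> n \<and> (\<forall>x \<in> {-1..1}.
           cmod (green \<eta> \<omega> x - poly p (of_real x)) \<le> 2 / ((1 - \<bar>\<omega>\<bar>) * (1 + \<eta>)^n))"
proof -
  obtain r where root: "r^2 - 2 * Complex \<omega> \<eta> * r + 1 = 0" and r1: "norm r \<le> 1"
    by (rule joukowski_root_in_unit_disc)
  have "norm r \<le> 1 / (1 + \<eta>)"
    using norm_joukowski_root_le[OF root r1] assms(1) by simp
  then have "2 * norm r^n / (1 - \<bar>\<omega>\<bar>) \<le> 2 * (1 / (1 + \<eta>))^n / (1 - \<bar>\<omega>\<bar>)"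
    using assms by (intro divide_right_mono mult_left_mono power_mono) simp_all
  then have "\<forall>x \<in> {-1..1}. cmod (green \<eta> \<omega> x - poly (smult (of_real \<eta>) (cheb_resolvent_approx r n)) (of_real x))
      \<le> 2 / ((1 - \<bar>\<omega>\<bar>) * (1 + \<eta>)^n)"
    using norm_green_minus_cheb_resolvent_approx_le[OF root r1 assms, of _ n]
    by (fastforce simp: abs_le_iff power_one_over field_simps)
  moreover have "degree (smult (of_real \<eta>) (cheb_resolvent_approx r n)) \<le> n"
    using degree_cheb_resolvent_approx_le by (rule order.trans[OF degree_smult_le])
  ultimately show ?thesis
    by blast
qed

lemma divide_one_plus_le_ln_one_plus:
  fixes x :: real
  assumes "-1 < x"
  shows "x / (1 + x) \<le> ln (1 + x)"
proof -
  have "- ln (1 + x) = ln (inverse (1 + x))"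
    using assms by (simp add: ln_inverse)
  also have "\<dots> \<le> inverse (1 + x) - 1"
    using assms by (intro ln_le_minus_one) simp
  also have "\<dots> = - (x / (1 + x))"
    using assms by (simp add: field_simps)
  finally show ?thesis
    by simp
qed

lemma le_one_plus_power_nat_ceiling:
  fixes \<eta> B :: real
  assumes "0 < \<eta>" "\<eta> \<le> 1" "1 \<le> B"
  shows "B \<le> (1 + \<eta>) ^ nat \<lceil>2 * ln B / \<eta>\<rceil>"
proof -
  define n where "n = nat \<lceil>2 * ln B / \<eta>\<rceil>"
  have "ln B = (2 * ln B / \<eta>) * (\<eta> / 2)"
    using assms by simp
  also have "\<dots> \<le> real n * ln (1 + \<eta>)"
  proof (rule mult_mono)
    show "2 * ln B / \<eta> \<le> real n"
      unfolding n_def by linarith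
    have "\<eta> / 2 \<le> \<eta> / (1 + \<eta>)"
      using assms by (intro divide_left_mono) simp_all
    also have "\<dots> \<le> ln (1 + \<eta>)"
      using assms by (intro divide_one_plus_le_ln_one_plus) simp
    finally show "\<eta> / 2 \<le> ln (1 + \<eta>)" .
  qed (use assms in simp_all)
  also have "\<dots> = ln ((1 + \<eta>) ^ n)"
    using assms by (simp add: ln_realpow)
  finally show ?thesis
    using assms by (simp add: n_def)
qed

lemma real_nat_ceiling_sum_div_le:
  fixes K u \<eta> :: real
  assumes "0 \<le> K" "1 / 2 \<le> u" "0 < \<eta>" "\<eta> \<le> 1"
  shows "real (nat \<lceil>2 * (K + u) / \<eta>\<rceil>) \<le> (4 * K + 4) * u / \<eta>"
proof -
  have "real (nat \<lceil>2 * (K + u) / \<eta>\<rceil>) \<le> 2 * (K + u) / \<eta> + 1"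
    using assms of_int_ceiling_le_add_one[of "2 * (K + u) / \<eta>"] by simp
  also have "\<dots> = (2 * K + 2 * u + \<eta>) / \<eta>"
    using assms(3) by (simp add: field_simps)
  also have "\<dots> \<le> (4 * K + 4) * u / \<eta>"
  proof (rule divide_right_mono)
    have "4 * K * (1 / 2) \<le> 4 * K * u"
      using assms(1,2) by (intro mult_left_mono) simp_all
    then show "2 * K + 2 * u + \<eta> \<le> (4 * K + 4) * u"
      using assms(2,4) by (simp add: algebra_simps)
  qed (use assms(3) in simp)
  finally show ?thesis .
qed

lemma green_poly_approx_ceiling_degree:
  assumes "c < 1" "\<bar>\<omega>\<bar> \<le> c" "0 < \<eta>" "\<eta> \<le> 1" "0 < \<epsilon>" "\<epsilon> < 1"
  shows "\<exists>p. degree p \<le> nat \<lceil>2 * ln (2 / ((1 - c) * \<epsilon>)) / \<eta>\<rceil> \<and>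
           (\<forall>x \<in> {-1..1}. cmod (green \<eta> \<omega> x - poly p (of_real x)) \<le> \<epsilon>)"
proof -
  define B where "B = 2 / ((1 - c) * \<epsilon>)"
  define n where "n = nat \<lceil>2 * ln B / \<eta>\<rceil>"
  have "1 * 1 \<le> (2 / (1 - c)) * (1 / \<epsilon>)"
    using assms by (intro mult_mono) (simp_all add: field_simps)
  then have "1 \<le> B"
    by (simp add: B_def)
  obtain p where deg: "degree p \<le> n" and err: "\<forall>x \<in> {-1..1}.
      cmod (green \<eta> \<omega> x - poly p (of_real x)) \<le> 2 / ((1 - \<bar>\<omega>\<bar>) * (1 + \<eta>)^n)"
    using green_cheb_approx[OF assms(3), of \<omega> n] assms(1,2) by auto
  have "2 / ((1 - \<bar>\<omega>\<bar>) * (1 + \<eta>)^n) \<le> 2 / ((1 - c) * B)"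
    using assms \<open>1 \<le> B\<close> le_one_plus_power_nat_ceiling[OF assms(3,4) \<open>1 \<le> B\<close>]
    by (intro divide_left_mono mult_mono) (simp_all add: n_def)
  also have "\<dots> = \<epsilon>"
    using assms by (simp add: B_def field_simps)
  finally show ?thesis
    using deg err by (fastforce simp: n_def B_def)
qed

lemma green_poly_approx_log_degree:
  assumes "c < 1" "\<bar>\<omega>\<bar> \<le> c" "0 < \<eta>" "\<eta> \<le> 1" "0 < \<epsilon>" "\<epsilon> < 1"
  shows "\<exists>p. real (degree p) \<le> (4 * ln (2 / (1 - c)) + 4) * (1 / \<eta>) * ln (1 / \<epsilon>) \<and>
           (\<forall>x \<in> {-1..1}. cmod (green \<eta> \<omega> x - poly p (of_real x)) \<le> \<epsilon>)"
proof -
  define K where "K = ln (2 / (1 - c))"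
  define u where "u = ln (1 / \<epsilon>)"
  have K: "0 < K"
    using assms(1,2) by (simp add: K_def)
  show ?thesis
  proof (cases "1 / 2 \<le> \<epsilon>")
    case True
    have "cmod (green \<eta> \<omega> x - poly [:-\<i> / 2:] (of_real x)) \<le> \<epsilon>" for x
      using norm_green_plus_half_i[OF assms(3), of \<omega> x] True by simp
    moreover have "0 \<le> (4 * K + 4) * (1 / \<eta>) * u"
      using K assms by (simp add: u_def)
    ultimately show ?thesis
      by (intro exI[of _ "[:-\<i> / 2:]"]) (simp add: K_def u_def)
  next
    case False
    obtain p where deg: "degree p \<le> nat \<lceil>2 * ln (2 / ((1 - c) * \<epsilon>)) / \<eta>\<rceil>"
      and err: "\<forall>x \<in> {-1..1}. cmod (green \<eta> \<omega> x - poly p (of_real x)) \<le> \<epsilon>"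
      using green_poly_approx_ceiling_degree[OF assms] by blast
    have "ln (2 / ((1 - c) * \<epsilon>)) = K + u"
      using assms by (simp add: K_def u_def ln_mult ln_div)
    then have "real (degree p) \<le> real (nat \<lceil>2 * (K + u) / \<eta>\<rceil>)"
      using deg by simp
    also have "\<dots> \<le> (4 * K + 4) * u / \<eta>"
    proof (rule real_nat_ceiling_sum_div_le)
      have "ln 2 \<le> u"
        using False assms(5) by (simp add: u_def field_simps)
      then show "1 / 2 \<le> u"
        using ln2_ge_two_thirds by simp
    qed (use K assms(3,4) in simp_all)
    finally have "real (degree p) \<le> (4 * K + 4) * u / \<eta>" .
    with err show ?thesis
      by (auto simp: K_def u_def)
  qed
qed

lemma green_poly_approx_log_degree_bounded:
  assumes "c < 1" "\<bar>\<omega>\<bar> \<le> c" "0 < \<eta>" "\<eta> \<le> 1" "0 < \<epsilon>" "\<epsilon> < 1"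
  shows "\<exists>p. real (degree p) \<le> (4 * ln (2 / (1 - c)) + 4) * (1 / \<eta>) * ln (1 / \<epsilon>) \<and>
           (\<forall>x \<in> {-1..1}. cmod (green \<eta> \<omega> x - poly p (of_real x)) \<le> \<epsilon>) \<and>
           (\<forall>x \<in> {-1..1}. cmod (poly p (of_real x)) \<le> 1 + \<epsilon>)"
proof -
  obtain p where deg: "real (degree p) \<le> (4 * ln (2 / (1 - c)) + 4) * (1 / \<eta>) * ln (1 / \<epsilon>)"
    and err: "\<forall>x \<in> {-1..1}. cmod (green \<eta> \<omega> x - poly p (of_real x)) \<le> \<epsilon>"
    using green_poly_approx_log_degree[OF assms] by blast
  have "cmod (poly p (of_real x)) \<le> 1 + \<epsilon>" if "x \<in> {-1..1}" for x
    using norm_triangle_sub[of "poly p (of_real x)" "green \<eta> \<omega> x"]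
      norm_green_le_1[OF assms(3), of \<omega> x] err that
    by (fastforce simp: norm_minus_commute)
  with deg err show ?thesis
    by blast
qed

theorem theorem3:
  fixes c :: real
  assumes "0 < c" "c < 1"
  shows "\<exists>C > 0. \<forall>\<eta> \<omega> \<epsilon>. 0 < \<eta> \<and> \<eta> \<le> 1 \<and> -c \<le> \<omega> \<and> \<omega> \<le> c \<and> 0 < \<epsilon> \<and> \<epsilon> < 1 \<longrightarrow>
     (\<exists>p :: complex poly.
        real (degree p) \<le> C * (1 / \<eta>) * ln (1 / \<epsilon>) \<and>
        (\<forall>x \<in> {-1..1::real}. cmod (green \<eta> \<omega> x - poly p (complex_of_real x)) \<le> \<epsilon>) \<and>
        (\<forall>x \<in> {-1..1::real}. cmod (poly p (complex_of_real x)) \<le> 1 + \<epsilon>))"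
proof (intro exI[of _ "4 * ln (2 / (1 - c)) + 4"] conjI allI impI)
  have "0 < ln (2 / (1 - c))"
    using assms by simp
  then show "0 < 4 * ln (2 / (1 - c)) + 4"
    by simp
qed (use green_poly_approx_log_degree_bounded[OF assms(2)] in \<open>auto simp: abs_le_iff\<close>)

end
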